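(* Let $r:\mathbb X\to[0,1)$ and $\alpha=\frac{r}{1-r}:\mathbb X\to[0,\infty)$. Suppose that, for all $x\in\mathbb X$, \[ |z(x)|\prod_{\substack{X\Subset\mathbb X:\\ x\in X}}\max\Big\{|W(X)|,\ 1+|W(X)-1|\,\alpha^S \ \Big|\ \varnothing\neq S\subset X\setminus\{x\}\Big\}\le r(x). \] Then for every $\Lambda\Subset\mathbb X$ one has $Z(\Lambda)\neq 0$, and $\sup_{\Lambda\Subset\mathbb X\setminus\{x\}}|\widehat z(x,\Lambda)|\le r(x)<1$ for all $x\in\mathbb X$. Moreover, for all $\Lambda\Subset\mathbb X$, \[ 0<(1-r)^\Lambda\le|Z(\Lambda)|\le(1+r)^\Lambda . \]
   Context: $\mathbb X$ is a finite or countably infinite set; $X\Subset\mathbb X$ means $X$ is a finite subset of $\mathbb X$, and $\mathbf F$ denotes the set of finite subsets of $\mathbb X$. Fix an activity $z:\mathbb X\to\mathbb C$ and an interaction $W:\mathbf F\to\mathbb C$; write $W(x)=W(\{x\})$. For a function $f$ on $\mathbb X$ and $X\Subset\mathbb X$ write $f^X=\prod_{x\in X}f(x)$ (empty products equal $1$); e.g. $(1-r)^\Lambda=\prod_{x\in\Lambda}(1-r(x))$. The Boltzmann factor is $\kappa(X)=\prod_{S\subset X,\,S\neq\varnothing}W(S)$. For $\Lambda\Subset\mathbb X$ the partition function is $Z(\Lambda)=\sum_{X\subset\Lambda}z^X\kappa(X)$; for $x\in\mathbb X\setminus\Lambda$ the pinned partition function is $Z(x,\Lambda)=\sum_{Y\subset\Lambda}z^{\{x\}\cup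 Y}\kappa(\{x\}\cup Y)$ and, when $Z(\Lambda)\neq0$, the effective activity is $\widehat z(x,\Lambda)=Z(x,\Lambda)/Z(\Lambda)$. In the displayed maximum, the max is taken over $|W(X)|$ together with all numbers $1+|W(X)-1|\alpha^S$ for nonempty $S\subset X\setminus\{x\}$ (so for $X=\{x\}$ the factor is $|W(x)|$). The product over all finite $X\ni x$ is a product of nonnegative numbers, understood in $[0,\infty]$. *)

theory Defs
  imports "HOL-Analysis.Analysis" "HOL-Library.Countable"
begin

definition kappa :: "('a set \<Rightarrow> complex) \<Rightarrow> 'a set \<Rightarrow> complex" where
  "kappa W X = (\<Prod>S\<in>Pow X - {{}}. W S)"

definition Zpart :: "('a \<Rightarrow> complex) \<Rightarrow> ('a set \<Rightarrow> complex) \<Rightarrow> 'a set \<Rightarrow> complex" where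
  "Zpart z W \<Lambda> = (\<Sum>X\<in>Pow \<Lambda>. (\<Prod>y\<in>X. z y) * kappa W X)"

definition Zpinned :: "('a \<Rightarrow> complex) \<Rightarrow> ('a set \<Rightarrow> complex) \<Rightarrow> 'a \<Rightarrow> 'a set \<Rightarrow> complex" where
  "Zpinned z W x \<Lambda> = (\<Sum>Y\<in>Pow \<Lambda>. (\<Prod>y\<in>insert x Y. z y) * kappa W (insert x Y))"

definition eff_act :: "('a \<Rightarrow> complex) \<Rightarrow> ('a set \<Rightarrow> complex) \<Rightarrow> 'a \<Rightarrow> 'a set \<Rightarrow> complex" where
  "eff_act z W x \<Lambda> = Zpinned z W x \<Lambda> / Zpart z W \<Lambda>"

definition max_factor :: "('a set \<Rightarrow> complex) \<Rightarrow> ('a \<Rightarrow> real) \<Rightarrow> 'a \<Rightarrow> 'a set \<Rightarrow> real" where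
  "max_factor W \<alpha> x X =
     Max ({cmod (W X)} \<union> {1 + cmod (W X - 1) * (\<Prod>s\<in>S. \<alpha> s) | S. S \<noteq> {} \<and> S \<subseteq> X - {x}})"

definition ennprod :: "('b \<Rightarrow> ennreal) \<Rightarrow> 'b set \<Rightarrow> ennreal" where
  "ennprod f A = Lim (finite_subsets_at_top A) (\<lambda>F. \<Prod>b\<in>F. f b)"

end

theory Submission
  imports Defs
begin

text \<open>The core is the finite-volume estimate \<open>|Z(x,\<Lambda>)| \<le> r(x) |Z(\<Lambda>)|\<close> for \<open>x \<notin> \<Lambda>\<close>, proved by
  induction on \<open>|\<Lambda>|\<close> simultaneously for all interactions satisfying the condition restricted to
  subsets of \<open>\<Lambda> \<union> {x}\<close>.

  Pinning \<open>x\<close> gives \<open>Z(x,\<Lambda>) = z(x) W(x) Z'(\<Lambda>)\<close>, where \<open>Z'\<close> is the partition function of the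
  interaction \<open>W'(T) = W(T) W(T \<union> {x})\<close>. Switching on the factors \<open>W(T \<union> {x})\<close> one set \<open>T\<close> at a
  time changes the partition function by \<open>W(T \<union> {x}) - 1\<close> times the sum over the configurations
  containing \<open>T\<close>. Pinning the points \<open>s\<close> of \<open>T\<close> one after another, the induction hypothesis bounds
  that sum by \<open>\<alpha>\<^sup>T |Z|\<close>: the bound \<open>|Z(s,\<Lambda>')| \<le> r(s) |Z(\<Lambda>')|\<close> forces
  \<open>|Z(s,\<Lambda>')| \<le> \<alpha>(s) |Z(\<Lambda>' \<union> {s})|\<close>. Hence each switch costs at most the factor
  \<open>1 + |W(T \<union> {x}) - 1| \<alpha>\<^sup>T\<close>, and the condition says exactly that these factors times \<open>|z(x) W(x)|\<close>
  multiply to at most \<open>r(x)\<close>. The induction applies to pinned interactions because the condition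
  is inherited by them: the maximal factor is submultiplicative, which is what the term \<open>|W(X)|\<close>
  in the maximum is for.

  Finally \<open>Z(\<Lambda> \<union> {x}) = Z(\<Lambda>) + Z(x,\<Lambda>)\<close> gives
  \<open>(1 - r(x)) |Z(\<Lambda>)| \<le> |Z(\<Lambda> \<union> {x})| \<le> (1 + r(x)) |Z(\<Lambda>)|\<close>.\<close>

lemma norm_add_bounds:
  fixes a b :: "'v::real_normed_vector"
  assumes "norm b \<le> \<rho> * norm a"
  shows "(1 - \<rho>) * norm a \<le> norm (a + b)" and "norm (a + b) \<le> (1 + \<rho>) * norm a"
  using assms norm_diff_ineq[of a b] norm_triangle_ineq[of a b] by (simp_all add: algebra_simps)

lemma norm_le_odds_norm_add:
  fixes a b :: "'v::real_normed_vector"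
  assumes b: "norm b \<le> \<rho> * norm a" and \<rho>: "0 \<le> \<rho>" "\<rho> < 1"
  shows "norm b \<le> \<rho> / (1 - \<rho>) * norm (a + b)"
proof -
  have "norm b * (1 - \<rho>) \<le> \<rho> * ((1 - \<rho>) * norm a)"
    using mult_right_mono[OF b, of "1 - \<rho>"] \<rho> by (simp add: algebra_simps)
  also have "\<dots> \<le> \<rho> * norm (a + b)"
    by (rule mult_left_mono[OF norm_add_bounds(1)[OF b] \<rho>(1)])
  finally show ?thesis
    using \<rho> by (simp add: field_simps)
qed

lemma ennprod_eq_SUP:
  fixes f :: "'b \<Rightarrow> ennreal"
  assumes "F \<subseteq> D" "finite F" and ge_1: "\<And>b. b \<in> D - F \<Longrightarrow> 1 \<le> f b"
  shows "ennprod f D = (SUP G\<in>{G. finite G \<and> F \<subseteq> G \<and> G \<subseteq> D}. \<Prod>b\<in>G. f b)"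
proof -
  let ?g = "\<lambda>G. \<Prod>b\<in>G. f b"
  define L where "L = (SUP G\<in>{G. finite G \<and> F \<subseteq> G \<and> G \<subseteq> D}. ?g G)"
  have mono: "?g G \<le> ?g G'" if "F \<subseteq> G" "G \<subseteq> G'" "G' \<subseteq> D" "finite G'" for G G'
  proof -
    have "?g G' = ?g (G' - G) * ?g G"
      by (rule prod.subset_diff) (use that in auto)
    moreover have "1 \<le> ?g (G' - G)"
      by (rule prod_ge_1) (use that ge_1 in auto)
    ultimately show ?thesis
      by (metis mult_right_mono mult_1 zero_le)
  qed
  have "(?g \<longlongrightarrow> L) (finite_subsets_at_top D)"
  proof (rule order_tendstoI)
    fix a assume "a < L"
    then obtain G0 where "finite G0" "F \<subseteq> G0" "G0 \<subseteq> D" "a < ?g G0"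
      unfolding L_def by (auto simp: less_SUP_iff)
    then show "eventually (\<lambda>G. a < ?g G) (finite_subsets_at_top D)"
      unfolding eventually_finite_subsets_at_top
      by (intro exI[of _ G0] conjI allI impI) (auto intro: less_le_trans mono)
  next
    fix a assume "L < a"
    have "?g G < a" if "finite G" "F \<subseteq> G" "G \<subseteq> D" for G
    proof -
      have "?g G \<le> L"
        unfolding L_def by (rule SUP_upper) (use that in auto)
      then show ?thesis
        using \<open>L < a\<close> by (rule le_less_trans)
    qed
    then show "eventually (\<lambda>G. ?g G < a) (finite_subsets_at_top D)"
      unfolding eventually_finite_subsets_at_top
      by (intro exI[of _ F] conjI allI impI) (use assms(1,2) in auto)
  qed
  then show ?thesis
    unfolding ennprod_def L_def by (rule tendsto_Lim[rotated]) (simp add: finite_subsets_at_top_neq_bot)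
qed

lemma prod_le_ennprod:
  fixes f :: "'b \<Rightarrow> ennreal"
  assumes "F \<subseteq> D" "finite F" "\<And>b. b \<in> D - F \<Longrightarrow> 1 \<le> f b"
  shows "(\<Prod>b\<in>F. f b) \<le> ennprod f D"
proof -
  have "(\<Prod>b\<in>F. f b) \<le> (SUP G\<in>{G. finite G \<and> F \<subseteq> G \<and> G \<subseteq> D}. \<Prod>b\<in>G. f b)"
    by (rule SUP_upper) (use assms in auto)
  then show ?thesis
    using ennprod_eq_SUP[OF assms] by simp
qed

lemma max_factor_set_finite:
  assumes "finite X"
  shows "finite ({cmod (W X)} \<union> {1 + cmod (W X - 1) * (\<Prod>s\<in>S. \<alpha> s) | S. S \<noteq> {} \<and> S \<subseteq> X - {x}})"
proof -
  have "{1 + cmod (W X - 1) * (\<Prod>s\<in>S. \<alpha> s) | S. S \<noteq> {} \<and> S \<subseteq> X - {x}}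
        \<subseteq> (\<lambda>S. 1 + cmod (W X - 1) * (\<Prod>s\<in>S. \<alpha> s)) ` Pow X"
    by auto
  then show ?thesis
    using assms by (meson finite_Pow_iff finite_Un finite_imageI finite.emptyI finite.insertI finite_subset)
qed

lemma max_factor_ge_norm: "finite X \<Longrightarrow> cmod (W X) \<le> max_factor W \<alpha> x X"
  unfolding max_factor_def by (rule Max_ge[OF max_factor_set_finite]) auto

lemma max_factor_nonneg: "finite X \<Longrightarrow> 0 \<le> max_factor W \<alpha> x X"
  using max_factor_ge_norm[of X W \<alpha> x] norm_ge_zero[of "W X"] by linarith

lemma max_factor_ge:
  "finite X \<Longrightarrow> S \<noteq> {} \<Longrightarrow> S \<subseteq> X - {x} \<Longrightarrow>
   1 + cmod (W X - 1) * (\<Prod>s\<in>S. \<alpha> s) \<le> max_factor W \<alpha> x X"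
  unfolding max_factor_def by (rule Max_ge[OF max_factor_set_finite]) auto

lemma max_factor_ge_1:
  assumes "finite X" "\<And>s. 0 \<le> \<alpha> s" "X - {x} \<noteq> {}"
  shows "1 \<le> max_factor W \<alpha> x X"
proof -
  have "1 \<le> 1 + cmod (W X - 1) * (\<Prod>s\<in>X - {x}. \<alpha> s)"
    using assms(2) by (simp add: prod_nonneg)
  also have "\<dots> \<le> max_factor W \<alpha> x X"
    by (rule max_factor_ge) (use assms in auto)
  finally show ?thesis .
qed

lemma max_factor_singleton: "max_factor W \<alpha> x {x} = cmod (W {x})"
  unfolding max_factor_def by auto

lemma max_factor_le:
  assumes "finite X" "cmod (W X) \<le> M"
    and "\<And>S. S \<noteq> {} \<Longrightarrow> S \<subseteq> X - {x} \<Longrightarrow> 1 + cmod (W X - 1) * (\<Prod>s\<in>S. \<alpha> s) \<le> M"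
  shows "max_factor W \<alpha> x X \<le> M"
  unfolding max_factor_def
  by (rule Max.boundedI[OF max_factor_set_finite[OF assms(1)]]) (use assms in auto)

lemma max_factor_mult_le:
  assumes fin: "finite T" and \<alpha>_nonneg: "\<And>s. 0 \<le> \<alpha> s" and W': "W' T = W T * W (insert x T)"
  shows "max_factor W' \<alpha> y T \<le> max_factor W \<alpha> y T * max_factor W \<alpha> y (insert x T)"
proof (rule max_factor_le[OF fin])
  let ?A = "max_factor W \<alpha> y T" and ?B = "max_factor W \<alpha> y (insert x T)"
  have A0: "cmod (W T) \<le> ?A" by (rule max_factor_ge_norm[OF fin])
  have B0: "cmod (W (insert x T)) \<le> ?B" by (rule max_factor_ge_norm) (use fin in auto)
  show "cmod (W' T) \<le> ?A * ?B"
    unfolding W' norm_mult by (rule mult_mono[OF A0 B0]) (use max_factor_nonneg fin in auto)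
  fix S assume S: "S \<noteq> {}" "S \<subseteq> T - {y}"
  define c where "c = (\<Prod>s\<in>S. \<alpha> s)"
  have c_nonneg: "0 \<le> c" unfolding c_def using \<alpha>_nonneg by (simp add: prod_nonneg)
  have A1: "1 + cmod (W T - 1) * c \<le> ?A"
    unfolding c_def by (rule max_factor_ge[OF fin S])
  have B1: "1 + cmod (W (insert x T) - 1) * c \<le> ?B"
    unfolding c_def by (rule max_factor_ge) (use fin S in auto)
  have "W' T - 1 = (W T - 1) + W T * (W (insert x T) - 1)"
    unfolding W' by (simp add: algebra_simps)
  then have "cmod (W' T - 1) \<le> cmod (W T - 1) + cmod (W T) * cmod (W (insert x T) - 1)"
    by (metis norm_mult norm_triangle_ineq)
  then have "1 + cmod (W' T - 1) * c \<le> 1 + cmod (W T - 1) * c + cmod (W T) * (cmod (W (insert x T) - 1) * c)"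
    using mult_right_mono[OF _ c_nonneg] by (fastforce simp: algebra_simps)
  also have "\<dots> \<le> ?A + ?A * (cmod (W (insert x T) - 1) * c)"
    using A1 mult_right_mono[OF A0, of "cmod (W (insert x T) - 1) * c"] c_nonneg by simp
  also have "\<dots> = ?A * (1 + cmod (W (insert x T) - 1) * c)"
    by (simp add: algebra_simps)
  also have "\<dots> \<le> ?A * ?B"
    by (rule mult_left_mono[OF B1 max_factor_nonneg[OF fin]])
  finally show "1 + cmod (W' T - 1) * (\<Prod>s\<in>S. \<alpha> s) \<le> ?A * ?B"
    unfolding c_def .
qed

lemma inj_on_insert_notin: "inj_on (insert x) {T. x \<notin> T}"
  by (rule inj_onI) (metis Diff_insert_absorb mem_Collect_eq)

lemma prod_Pow_insert:
  assumes "finite \<Lambda>" "x \<notin> \<Lambda>"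
  shows "(\<Prod>T\<in>{T\<in>Pow (insert x \<Lambda>). P T}. f T)
       = (\<Prod>T\<in>{T\<in>Pow \<Lambda>. P T}. f T) * (\<Prod>T\<in>{T\<in>Pow \<Lambda>. P (insert x T)}. f (insert x T))"
proof -
  have split: "{T\<in>Pow (insert x \<Lambda>). P T} = {T\<in>Pow \<Lambda>. P T} \<union> insert x ` {T\<in>Pow \<Lambda>. P (insert x T)}"
    by (auto simp: Pow_insert)
  have inj: "inj_on (insert x) {T\<in>Pow \<Lambda>. P (insert x T)}"
    by (rule inj_on_subset[OF inj_on_insert_notin]) (use assms in auto)
  have "(\<Prod>T\<in>insert x ` {T\<in>Pow \<Lambda>. P (insert x T)}. f T) = (\<Prod>T\<in>{T\<in>Pow \<Lambda>. P (insert x T)}. f (insert x T))"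
    by (rule prod.reindex_cong[OF inj refl refl])
  then show ?thesis
    unfolding split using assms by (subst prod.union_disjoint) auto
qed

lemma Zpart_empty: "Zpart z W {} = 1"
  unfolding Zpart_def kappa_def by simp

lemma Zpart_insert:
  assumes "finite \<Lambda>" "x \<notin> \<Lambda>"
  shows "Zpart z W (insert x \<Lambda>) = Zpart z W \<Lambda> + Zpinned z W x \<Lambda>"
proof -
  have "inj_on (insert x) (Pow \<Lambda>)"
    by (rule inj_on_subset[OF inj_on_insert_notin]) (use assms in auto)
  then show ?thesis
    unfolding Zpart_def Zpinned_def Pow_insert using assms
    by (subst sum.union_disjoint) (auto simp: sum.reindex)
qed

text \<open>For \<open>A \<supseteq> Pow \<Lambda>\<close>, \<open>absorb x A W\<close> is the interaction felt by configurations in \<open>\<Lambda>\<close>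
  when \<open>x\<close> is occupied; enlarging \<open>A\<close> one set at a time interpolates between \<open>W\<close> and it.\<close>
definition absorb :: "'a \<Rightarrow> 'a set set \<Rightarrow> ('a set \<Rightarrow> complex) \<Rightarrow> 'a set \<Rightarrow> complex" where
  "absorb x A W T = (if T \<in> A \<and> T \<noteq> {} then W T * W (insert x T) else W T)"

lemma kappa_insert_absorb:
  assumes fin: "finite Y" and x: "x \<notin> Y" and A: "Pow Y \<subseteq> A"
  shows "kappa W (insert x Y) = W {x} * kappa (absorb x A W) Y"
proof -
  have inj: "inj_on (insert x) (Pow Y)"
    by (rule inj_on_subset[OF inj_on_insert_notin]) (use x in auto)
  have "kappa W (insert x Y) = (\<Prod>T\<in>Pow Y - {{}}. W T) * (\<Prod>T\<in>insert x ` Pow Y. W T)"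
  proof -
    have "Pow (insert x Y) - {{}} = (Pow Y - {{}}) \<union> insert x ` Pow Y"
      by (auto simp: Pow_insert)
    then show ?thesis
      unfolding kappa_def using fin x by (subst prod.union_disjoint[symmetric]) auto
  qed
  also have "(\<Prod>T\<in>insert x ` Pow Y. W T) = W {x} * (\<Prod>T\<in>Pow Y - {{}}. W (insert x T))"
    using fin by (simp add: prod.reindex[OF inj] prod.remove[of "Pow Y" "{}"])
  also have "(\<Prod>T\<in>Pow Y - {{}}. W T) * (W {x} * (\<Prod>T\<in>Pow Y - {{}}. W (insert x T)))
      = W {x} * (\<Prod>T\<in>Pow Y - {{}}. W T * W (insert x T))"
    by (simp add: prod.distrib)
  also have "(\<Prod>T\<in>Pow Y - {{}}. W T * W (insert x T)) = (\<Prod>T\<in>Pow Y - {{}}. absorb x A W T)"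
    unfolding absorb_def using A by (intro prod.cong) auto
  finally show ?thesis
    unfolding kappa_def .
qed

lemma sum_pinned_configurations:
  assumes "finite \<Lambda>" "x \<notin> \<Lambda>" "\<Y> \<subseteq> Pow \<Lambda>"
  shows "(\<Sum>Y\<in>\<Y>. (\<Prod>y\<in>insert x Y. z y) * kappa W (insert x Y))
       = z x * W {x} * (\<Sum>Y\<in>\<Y>. (\<Prod>y\<in>Y. z y) * kappa (absorb x (Pow \<Lambda>) W) Y)"
  unfolding sum_distrib_left
proof (rule sum.cong[OF refl])
  fix Y assume "Y \<in> \<Y>"
  then have "finite Y" "x \<notin> Y" "Pow Y \<subseteq> Pow \<Lambda>"
    using assms by (auto intro: finite_subset)
  then show "(\<Prod>y\<in>insert x Y. z y) * kappa W (insert x Y)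
      = z x * W {x} * ((\<Prod>y\<in>Y. z y) * kappa (absorb x (Pow \<Lambda>) W) Y)"
    by (simp add: kappa_insert_absorb algebra_simps)
qed

lemma Zpinned_eq_Zpart_absorb:
  assumes "finite \<Lambda>" "x \<notin> \<Lambda>"
  shows "Zpinned z W x \<Lambda> = z x * W {x} * Zpart z (absorb x (Pow \<Lambda>) W) \<Lambda>"
  unfolding Zpinned_def Zpart_def using assms by (simp add: sum_pinned_configurations)

definition Zcontaining :: "('a \<Rightarrow> complex) \<Rightarrow> ('a set \<Rightarrow> complex) \<Rightarrow> 'a set \<Rightarrow> 'a set \<Rightarrow> complex" where
  "Zcontaining z W \<Lambda> S = (\<Sum>Y\<in>{Y\<in>Pow \<Lambda>. S \<subseteq> Y}. (\<Prod>y\<in>Y. z y) * kappa W Y)"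

lemma Zcontaining_empty: "Zcontaining z W \<Lambda> {} = Zpart z W \<Lambda>"
  unfolding Zcontaining_def Zpart_def by (rule sum.cong) auto

lemma Zcontaining_insert:
  assumes fin: "finite \<Lambda>" and x: "x \<notin> \<Lambda>" "x \<notin> S"
  shows "Zcontaining z W (insert x \<Lambda>) (insert x S) = z x * W {x} * Zcontaining z (absorb x (Pow \<Lambda>) W) \<Lambda> S"
proof -
  let ?\<Y> = "{Y\<in>Pow \<Lambda>. S \<subseteq> Y}"
  have configs: "{Y\<in>Pow (insert x \<Lambda>). insert x S \<subseteq> Y} = insert x ` ?\<Y>"
    using x by (auto simp: Pow_insert image_iff)
  have inj: "inj_on (insert x) ?\<Y>"
    by (rule inj_on_subset[OF inj_on_insert_notin]) (use x in auto)
  show ?thesis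
    unfolding Zcontaining_def configs sum.reindex[OF inj] o_def
    by (rule sum_pinned_configurations[OF fin x(1)]) auto
qed

lemma absorb_insert:
  assumes "T \<notin> A" "T \<noteq> {}"
  shows "absorb x (insert T A) W U = absorb x A W U * (if U = T then W (insert x T) else 1)"
  unfolding absorb_def using assms by auto

lemma kappa_absorb_insert:
  assumes "T \<notin> A" "T \<noteq> {}" "finite Y"
  shows "kappa (absorb x (insert T A) W) Y = kappa (absorb x A W) Y * (if T \<subseteq> Y then W (insert x T) else 1)"
  unfolding kappa_def absorb_insert[OF assms(1,2)] prod.distrib
  using assms by (subst prod.delta) auto

lemma Zpart_absorb_insert:
  assumes "T \<notin> A" "T \<noteq> {}" "finite \<Lambda>"
  shows "Zpart z (absorb x (insert T A) W) \<Lambda>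
       = Zpart z (absorb x A W) \<Lambda> + (W (insert x T) - 1) * Zcontaining z (absorb x A W) \<Lambda> T"
proof -
  have "Zpart z (absorb x (insert T A) W) \<Lambda> = (\<Sum>Y\<in>Pow \<Lambda>. (\<Prod>y\<in>Y. z y) * kappa (absorb x A W) Y
      + (if T \<subseteq> Y then (W (insert x T) - 1) * ((\<Prod>y\<in>Y. z y) * kappa (absorb x A W) Y) else 0))"
    unfolding Zpart_def
  proof (rule sum.cong[OF refl])
    fix Y assume "Y \<in> Pow \<Lambda>"
    then have "finite Y" using assms finite_subset by auto
    then show "(\<Prod>y\<in>Y. z y) * kappa (absorb x (insert T A) W) Y = (\<Prod>y\<in>Y. z y) * kappa (absorb x A W) Y
      + (if T \<subseteq> Y then (W (insert x T) - 1) * ((\<Prod>y\<in>Y. z y) * kappa (absorb x A W) Y) else 0)"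
      using kappa_absorb_insert[OF assms(1,2)] by (simp add: algebra_simps)
  qed
  also have "\<dots> = Zpart z (absorb x A W) \<Lambda> + (W (insert x T) - 1) * Zcontaining z (absorb x A W) \<Lambda> T"
    unfolding Zpart_def Zcontaining_def sum.distrib sum_distrib_left using assms(3)
    by (subst sum.inter_filter) (auto intro!: sum.cong)
  finally show ?thesis .
qed

definition odds :: "('a \<Rightarrow> real) \<Rightarrow> 'a \<Rightarrow> real" where
  "odds r = (\<lambda>y. r y / (1 - r y))"

lemma odds_nonneg: "(\<And>x. 0 \<le> r x \<and> r x < 1) \<Longrightarrow> 0 \<le> odds r s"
  unfolding odds_def by (metis diff_ge_0_iff_ge divide_nonneg_nonneg less_eq_real_def)

definition finite_volume_condition ::
    "('a \<Rightarrow> real) \<Rightarrow> ('a \<Rightarrow> complex) \<Rightarrow> ('a set \<Rightarrow> complex) \<Rightarrow> 'a set \<Rightarrow> bool" where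
  "finite_volume_condition r z W \<Lambda> \<longleftrightarrow>
     (\<forall>y\<in>\<Lambda>. cmod (z y) * (\<Prod>T\<in>{T\<in>Pow \<Lambda>. y \<in> T}. max_factor W (odds r) y T) \<le> r y)"

lemma max_factor_absorb_le:
  assumes "finite T" "\<And>s. 0 \<le> \<alpha> s" "x \<noteq> y"
  shows "max_factor (absorb x A W) \<alpha> y T \<le> max_factor W \<alpha> y T * max_factor W \<alpha> y (insert x T)"
proof (cases "T \<in> A \<and> T \<noteq> {}")
  case True
  then show ?thesis
    by (intro max_factor_mult_le assms) (simp add: absorb_def)
next
  case False
  then have "absorb x A W T = W T"
    unfolding absorb_def by auto
  then have "max_factor (absorb x A W) \<alpha> y T = max_factor W \<alpha> y T"
    unfolding max_factor_def by simp
  moreover have "1 \<le> max_factor W \<alpha> y (insert x T)"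
    by (rule max_factor_ge_1) (use assms in auto)
  ultimately show ?thesis
    using max_factor_nonneg[OF assms(1), of W \<alpha> y] by (metis mult_left_mono mult.right_neutral)
qed

lemma finite_volume_condition_absorb:
  assumes r_range: "\<And>x. 0 \<le> r x \<and> r x < 1" and fin: "finite \<Lambda>" and x: "x \<notin> \<Lambda>"
    and cond: "finite_volume_condition r z W (insert x \<Lambda>)"
  shows "finite_volume_condition r z (absorb x A W) \<Lambda>"
  unfolding finite_volume_condition_def
proof
  fix y assume y: "y \<in> \<Lambda>"
  let ?f = "max_factor W (odds r) y"
  let ?\<T> = "{T\<in>Pow \<Lambda>. y \<in> T}"
  have "x \<noteq> y"
    using x y by auto
  have odds_nonneg': "0 \<le> odds r s" for s
    using r_range by (rule odds_nonneg)
  have "{T\<in>Pow \<Lambda>. y \<in> insert x T} = ?\<T>"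
    using x y by auto
  then have split: "(\<Prod>T\<in>{T\<in>Pow (insert x \<Lambda>). y \<in> T}. ?f T) = (\<Prod>T\<in>?\<T>. ?f T * ?f (insert x T))"
    using prod_Pow_insert[OF fin x, where P = "\<lambda>T. y \<in> T" and f = ?f] by (simp add: prod.distrib)
  have "(\<Prod>T\<in>?\<T>. max_factor (absorb x A W) (odds r) y T) \<le> (\<Prod>T\<in>?\<T>. ?f T * ?f (insert x T))"
  proof (rule prod_mono)
    fix T assume "T \<in> ?\<T>"
    then have "finite T"
      using fin finite_subset by auto
    then show "0 \<le> max_factor (absorb x A W) (odds r) y T
        \<and> max_factor (absorb x A W) (odds r) y T \<le> ?f T * ?f (insert x T)"
      using \<open>x \<noteq> y\<close> by (intro conjI max_factor_nonneg max_factor_absorb_le odds_nonneg')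
  qed
  then have "cmod (z y) * (\<Prod>T\<in>?\<T>. max_factor (absorb x A W) (odds r) y T)
      \<le> cmod (z y) * (\<Prod>T\<in>{T\<in>Pow (insert x \<Lambda>). y \<in> T}. ?f T)"
    unfolding split by (rule mult_left_mono) simp
  also have "\<dots> \<le> r y"
    using cond y unfolding finite_volume_condition_def by auto
  finally show "cmod (z y) * (\<Prod>T\<in>?\<T>. max_factor (absorb x A W) (odds r) y T) \<le> r y" .
qed

text \<open>The induction hypothesis on the volume. It quantifies over all interactions because pinning
  a point replaces \<open>W\<close> by an absorbed interaction.\<close>
definition pinned_ratio_bound :: "('a \<Rightarrow> real) \<Rightarrow> ('a \<Rightarrow> complex) \<Rightarrow> nat \<Rightarrow> bool" where
  "pinned_ratio_bound r z N \<longleftrightarrow>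
     (\<forall>W x \<Lambda>. finite \<Lambda> \<and> card \<Lambda> < N \<and> x \<notin> \<Lambda> \<and> finite_volume_condition r z W (insert x \<Lambda>)
        \<longrightarrow> cmod (Zpinned z W x \<Lambda>) \<le> r x * cmod (Zpart z W \<Lambda>))"

lemma Zcontaining_le:
  assumes r_range: "\<And>x. 0 \<le> r x \<and> r x < 1" and bound: "pinned_ratio_bound r z N" and "finite S"
  shows "finite \<Lambda> \<Longrightarrow> card \<Lambda> \<le> N \<Longrightarrow> finite_volume_condition r z W \<Lambda> \<Longrightarrow> S \<subseteq> \<Lambda> \<Longrightarrow>
     cmod (Zcontaining z W \<Lambda> S) \<le> (\<Prod>s\<in>S. odds r s) * cmod (Zpart z W \<Lambda>)"
  using \<open>finite S\<close>
proof (induction S arbitrary: \<Lambda> W rule: finite_induct)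
  case empty
  then show ?case
    by (simp add: Zcontaining_empty)
next
  case (insert s S)
  define \<Lambda>' where "\<Lambda>' = \<Lambda> - {s}"
  define W' where "W' = absorb s (Pow \<Lambda>') W"
  have \<Lambda>: "\<Lambda> = insert s \<Lambda>'" "finite \<Lambda>'" "s \<notin> \<Lambda>'" "card \<Lambda>' < N"
  proof -
    have "s \<in> \<Lambda>" "finite \<Lambda>" "card \<Lambda> \<le> N"
      using insert.prems by auto
    then show "\<Lambda> = insert s \<Lambda>'" "finite \<Lambda>'" "s \<notin> \<Lambda>'" "card \<Lambda>' < N"
      unfolding \<Lambda>'_def using card_Diff1_less[of \<Lambda> s] by auto
  qed
  have "cmod (Zcontaining z W' \<Lambda>' S) \<le> (\<Prod>s\<in>S. odds r s) * cmod (Zpart z W' \<Lambda>')"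
  proof (rule insert.IH)
    show "finite_volume_condition r z W' \<Lambda>'"
      unfolding W'_def using insert.prems \<Lambda> by (intro finite_volume_condition_absorb r_range) auto
  qed (use insert \<Lambda> in auto)
  then have "cmod (Zcontaining z W \<Lambda> (insert s S))
      \<le> cmod (z s * W {s}) * ((\<Prod>s\<in>S. odds r s) * cmod (Zpart z W' \<Lambda>'))"
    unfolding \<Lambda>(1) W'_def Zcontaining_insert[OF \<Lambda>(2,3) insert.hyps(2)] norm_mult[of "z s * W {s}"]
    by (rule mult_left_mono) simp
  also have "\<dots> = (\<Prod>s\<in>S. odds r s) * cmod (Zpinned z W s \<Lambda>')"
    unfolding W'_def Zpinned_eq_Zpart_absorb[OF \<Lambda>(2,3)] norm_mult by (simp add: algebra_simps)
  also have "\<dots> \<le> (\<Prod>s\<in>S. odds r s) * (odds r s * cmod (Zpart z W \<Lambda>))"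
  proof (rule mult_left_mono)
    have "cmod (Zpinned z W s \<Lambda>') \<le> r s * cmod (Zpart z W \<Lambda>')"
      using bound \<Lambda> insert.prems unfolding pinned_ratio_bound_def by auto
    then show "cmod (Zpinned z W s \<Lambda>') \<le> odds r s * cmod (Zpart z W \<Lambda>)"
      unfolding \<Lambda>(1) Zpart_insert[OF \<Lambda>(2,3)] odds_def using r_range
      by (intro norm_le_odds_norm_add) auto
  qed (intro prod_nonneg odds_nonneg r_range)
  also have "\<dots> = (\<Prod>s\<in>insert s S. odds r s) * cmod (Zpart z W \<Lambda>)"
    using insert.hyps by (simp add: algebra_simps)
  finally show ?case .
qed

lemma Zpart_absorb_le:
  assumes r_range: "\<And>x. 0 \<le> r x \<and> r x < 1" and bound: "pinned_ratio_bound r z N"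
    and fin: "finite \<Lambda>" and card: "card \<Lambda> \<le> N" and x: "x \<notin> \<Lambda>"
    and cond: "finite_volume_condition r z W (insert x \<Lambda>)" and A: "A \<subseteq> Pow \<Lambda> - {{}}"
  shows "cmod (Zpart z (absorb x A W) \<Lambda>)
       \<le> (\<Prod>T\<in>A. max_factor W (odds r) x (insert x T)) * cmod (Zpart z W \<Lambda>)"
proof -
  have "finite A"
    using A fin by (meson finite_Diff finite_Pow_iff finite_subset)
  then show ?thesis
    using A
  proof (induction A rule: finite_induct)
    case empty
    have "absorb x {} W = W"
      unfolding absorb_def by auto
    then show ?case
      by simp
  next
    case (insert T A)
    let ?W = "absorb x A W" and ?f = "max_factor W (odds r) x (insert x T)"
    have T: "T \<notin> A" "T \<noteq> {}" "T \<subseteq> \<Lambda>" "finite T"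
      using insert fin finite_subset by auto
    have "cmod (Zcontaining z ?W \<Lambda> T) \<le> (\<Prod>s\<in>T. odds r s) * cmod (Zpart z ?W \<Lambda>)"
      using finite_volume_condition_absorb[OF r_range fin x cond]
      by (intro Zcontaining_le[OF r_range bound] T fin card)
    have "cmod (Zpart z (absorb x (insert T A) W) \<Lambda>)
        \<le> cmod (Zpart z ?W \<Lambda>) + cmod (W (insert x T) - 1) * cmod (Zcontaining z ?W \<Lambda> T)"
      unfolding Zpart_absorb_insert[OF T(1,2) fin] by (metis norm_mult norm_triangle_ineq)
    also have "\<dots> \<le> cmod (Zpart z ?W \<Lambda>)
        + cmod (W (insert x T) - 1) * ((\<Prod>s\<in>T. odds r s) * cmod (Zpart z ?W \<Lambda>))"
      using \<open>cmod (Zcontaining z ?W \<Lambda> T) \<le> _\<close> by (intro add_left_mono mult_left_mono) simp_all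
    also have "\<dots> = (1 + cmod (W (insert x T) - 1) * (\<Prod>s\<in>T. odds r s)) * cmod (Zpart z ?W \<Lambda>)"
      by (simp add: algebra_simps)
    also have "\<dots> \<le> ?f * cmod (Zpart z ?W \<Lambda>)"
      by (intro mult_right_mono max_factor_ge) (use T x in auto)
    also have "\<dots> \<le> ?f * ((\<Prod>T\<in>A. max_factor W (odds r) x (insert x T)) * cmod (Zpart z W \<Lambda>))"
      using insert T by (intro mult_left_mono max_factor_nonneg) auto
    also have "\<dots> = (\<Prod>T\<in>insert T A. max_factor W (odds r) x (insert x T)) * cmod (Zpart z W \<Lambda>)"
      using insert by (simp add: algebra_simps)
    finally show ?case .
  qed
qed

lemma pinned_ratio_bound_Suc:
  assumes r_range: "\<And>x. 0 \<le> r x \<and> r x < 1" and bound: "pinned_ratio_bound r z N"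
  shows "pinned_ratio_bound r z (Suc N)"
  unfolding pinned_ratio_bound_def
proof (intro allI impI, elim conjE)
  fix W :: "'a set \<Rightarrow> complex" and x \<Lambda>
  assume fin: "finite \<Lambda>" and card: "card \<Lambda> < Suc N" and x: "x \<notin> \<Lambda>"
    and cond: "finite_volume_condition r z W (insert x \<Lambda>)"
  let ?f = "max_factor W (odds r) x"
  have "absorb x (Pow \<Lambda>) W = absorb x (Pow \<Lambda> - {{}}) W"
    unfolding absorb_def by auto
  then have "cmod (Zpinned z W x \<Lambda>) = cmod (z x) * cmod (W {x}) * cmod (Zpart z (absorb x (Pow \<Lambda> - {{}}) W) \<Lambda>)"
    by (simp add: Zpinned_eq_Zpart_absorb[OF fin x] norm_mult)
  also have "\<dots> \<le> cmod (z x) * cmod (W {x}) * ((\<Prod>T\<in>Pow \<Lambda> - {{}}. ?f (insert x T)) * cmod (Zpart z W \<Lambda>))"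
    using card by (intro mult_left_mono Zpart_absorb_le[OF r_range bound fin _ x cond]) auto
  also have "\<dots> = cmod (z x) * (\<Prod>T\<in>{T\<in>Pow (insert x \<Lambda>). x \<in> T}. ?f T) * cmod (Zpart z W \<Lambda>)"
  proof -
    have "(\<Prod>T\<in>{T\<in>Pow (insert x \<Lambda>). x \<in> T}. ?f T) = (\<Prod>T\<in>Pow \<Lambda>. ?f (insert x T))"
    proof -
      have "{T\<in>Pow \<Lambda>. x \<in> T} = {}" "{T\<in>Pow \<Lambda>. x \<in> insert x T} = Pow \<Lambda>"
        using x by auto
      then show ?thesis
        using prod_Pow_insert[OF fin x, where P = "\<lambda>T. x \<in> T" and f = ?f] by (simp only: prod.empty mult_1)
    qed
    also have "\<dots> = cmod (W {x}) * (\<Prod>T\<in>Pow \<Lambda> - {{}}. ?f (insert x T))"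
      using fin by (simp add: prod.remove[of "Pow \<Lambda>" "{}"] max_factor_singleton)
    finally show ?thesis
      by simp
  qed
  also have "\<dots> \<le> r x * cmod (Zpart z W \<Lambda>)"
    using cond by (intro mult_right_mono) (auto simp: finite_volume_condition_def)
  finally show "cmod (Zpinned z W x \<Lambda>) \<le> r x * cmod (Zpart z W \<Lambda>)" .
qed

lemma Zpinned_le:
  assumes r_range: "\<And>x. 0 \<le> r x \<and> r x < 1" and "finite \<Lambda>" "x \<notin> \<Lambda>"
    and "finite_volume_condition r z W (insert x \<Lambda>)"
  shows "cmod (Zpinned z W x \<Lambda>) \<le> r x * cmod (Zpart z W \<Lambda>)"
proof -
  have "pinned_ratio_bound r z N" for N
  proof (induction N)
    case 0
    show ?case
      unfolding pinned_ratio_bound_def by simp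
  next
    case (Suc N)
    show ?case
      by (rule pinned_ratio_bound_Suc[OF r_range Suc.IH])
  qed
  then show ?thesis
    using assms lessI[of "card \<Lambda>"] unfolding pinned_ratio_bound_def by blast
qed

lemma finite_volume_condition_of_ennprod:
  assumes r_range: "\<And>x. 0 \<le> r x \<and> r x < 1"
    and cond: "\<And>x. ennreal (cmod (z x)) *
        ennprod (\<lambda>X. ennreal (max_factor W (odds r) x X)) {X. finite X \<and> x \<in> X} \<le> ennreal (r x)"
    and fin: "finite \<Lambda>"
  shows "finite_volume_condition r z W \<Lambda>"
  unfolding finite_volume_condition_def
proof
  fix y assume y: "y \<in> \<Lambda>"
  let ?f = "max_factor W (odds r) y"
  let ?\<T> = "{T\<in>Pow \<Lambda>. y \<in> T}"
  have "ennreal (\<Prod>T\<in>?\<T>. ?f T) = (\<Prod>T\<in>?\<T>. ennreal (?f T))"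
    using fin by (intro prod_ennreal[symmetric] max_factor_nonneg) (auto intro: finite_subset)
  also have "\<dots> \<le> ennprod (\<lambda>X. ennreal (?f X)) {X. finite X \<and> y \<in> X}"
  proof (rule prod_le_ennprod)
    fix X assume X: "X \<in> {X. finite X \<and> y \<in> X} - ?\<T>"
    then have "X - {y} \<noteq> {}"
      using y by auto
    then have "1 \<le> ?f X"
      using X r_range by (intro max_factor_ge_1 odds_nonneg) auto
    then show "1 \<le> ennreal (?f X)"
      by (simp add: ennreal_leI)
  qed (use fin finite_subset in auto)
  finally have "ennreal (cmod (z y) * (\<Prod>T\<in>?\<T>. ?f T)) \<le> ennreal (r y)"
    using order_trans[OF mult_left_mono cond] by (simp add: ennreal_mult')
  then show "cmod (z y) * (\<Prod>T\<in>?\<T>. ?f T) \<le> r y"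
    using r_range[of y] ennreal_le_iff by blast
qed

lemma Zpart_bounds:
  assumes r_range: "\<And>x. 0 \<le> r x \<and> r x < 1"
    and pinned: "\<And>x \<Lambda>. finite \<Lambda> \<Longrightarrow> x \<notin> \<Lambda> \<Longrightarrow> cmod (Zpinned z W x \<Lambda>) \<le> r x * cmod (Zpart z W \<Lambda>)"
    and "finite \<Lambda>"
  shows "(\<Prod>y\<in>\<Lambda>. 1 - r y) \<le> cmod (Zpart z W \<Lambda>) \<and> cmod (Zpart z W \<Lambda>) \<le> (\<Prod>y\<in>\<Lambda>. 1 + r y)"
  using \<open>finite \<Lambda>\<close>
proof (induction \<Lambda> rule: finite_induct)
  case empty
  then show ?case
    by (simp add: Zpart_empty)
next
  case (insert x \<Lambda>)
  have bounds: "(1 - r x) * cmod (Zpart z W \<Lambda>) \<le> cmod (Zpart z W (insert x \<Lambda>))"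
    "cmod (Zpart z W (insert x \<Lambda>)) \<le> (1 + r x) * cmod (Zpart z W \<Lambda>)"
    unfolding Zpart_insert[OF insert.hyps] using norm_add_bounds[OF pinned[OF insert.hyps]] by auto
  have rx: "0 \<le> 1 - r x" "0 \<le> 1 + r x"
    using r_range[of x] by auto
  show ?case
    using insert.hyps order_trans[OF mult_left_mono[OF conjunct1[OF insert.IH] rx(1)] bounds(1)]
      order_trans[OF bounds(2) mult_left_mono[OF conjunct2[OF insert.IH] rx(2)]]
    by simp
qed

theorem theorem2p1:
  fixes z :: "'a::countable \<Rightarrow> complex"
    and W :: "'a set \<Rightarrow> complex"
    and r :: "'a \<Rightarrow> real"
  assumes r_range: "\<And>x. 0 \<le> r x \<and> r x < 1"
    and cond: "\<And>x. ennreal (cmod (z x)) *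
        ennprod (\<lambda>X. ennreal (max_factor W (\<lambda>y. r y / (1 - r y)) x X)) {X. finite X \<and> x \<in> X}
        \<le> ennreal (r x)"
  shows "(\<forall>\<Lambda>. finite \<Lambda> \<longrightarrow> Zpart z W \<Lambda> \<noteq> 0)
    \<and> (\<forall>x. (SUP \<Lambda>\<in>{\<Lambda>. finite \<Lambda> \<and> x \<notin> \<Lambda>}. ennreal (cmod (eff_act z W x \<Lambda>))) \<le> ennreal (r x)
           \<and> r x < 1)
    \<and> (\<forall>\<Lambda>. finite \<Lambda> \<longrightarrow>
          0 < (\<Prod>y\<in>\<Lambda>. 1 - r y)
        \<and> (\<Prod>y\<in>\<Lambda>. 1 - r y) \<le> cmod (Zpart z W \<Lambda>)
        \<and> cmod (Zpart z W \<Lambda>) \<le> (\<Prod>y\<in>\<Lambda>. 1 + r y))"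
proof -
  have pinned: "cmod (Zpinned z W x \<Lambda>) \<le> r x * cmod (Zpart z W \<Lambda>)" if "finite \<Lambda>" "x \<notin> \<Lambda>" for x \<Lambda>
    using that by (intro Zpinned_le r_range finite_volume_condition_of_ennprod cond[folded odds_def]) auto
  have bounds: "(\<Prod>y\<in>\<Lambda>. 1 - r y) \<le> cmod (Zpart z W \<Lambda>) \<and> cmod (Zpart z W \<Lambda>) \<le> (\<Prod>y\<in>\<Lambda>. 1 + r y)"
    if "finite \<Lambda>" for \<Lambda>
    by (rule Zpart_bounds) (use r_range pinned that in auto)
  have pos: "0 < (\<Prod>y\<in>\<Lambda>. 1 - r y)" for \<Lambda>
    using r_range by (intro prod_pos) (simp add: algebra_simps)
  have nonzero: "Zpart z W \<Lambda> \<noteq> 0" if "finite \<Lambda>" for \<Lambda>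
    using bounds[OF that] pos[of \<Lambda>] by auto
  have "cmod (eff_act z W x \<Lambda>) \<le> r x" if "finite \<Lambda>" "x \<notin> \<Lambda>" for x \<Lambda>
    using pinned[OF that] nonzero[OF that(1)]
    by (simp add: eff_act_def norm_divide divide_le_eq)
  then have "(SUP \<Lambda>\<in>{\<Lambda>. finite \<Lambda> \<and> x \<notin> \<Lambda>}. ennreal (cmod (eff_act z W x \<Lambda>))) \<le> ennreal (r x)" for x
    by (intro SUP_least ennreal_leI) auto
  then show ?thesis
    using nonzero bounds pos r_range by blast
qed

end
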